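(* For $n\ge2$ and all $P,Q\in\Gamma_n$, $D_{\Psi h}(P\|Q)\le \frac98 D_{\Psi J}(P\|Q)$.
   Context: $\Gamma_n=\{P=(p_1,\dots,p_n): p_i>0,\ \sum p_i=1\}$. $h(P\|Q)=\frac12\sum_{i=1}^n(\sqrt{p_i}-\sqrt{q_i})^2$; $\Psi(P\|Q)=\sum_{i=1}^n\frac{(p_i-q_i)^2(p_i+q_i)}{p_iq_i}$; $J(P\|Q)=\sum_{i=1}^n(p_i-q_i)\ln\frac{p_i}{q_i}$. $D_{\Psi h}=\frac1{16}\Psi-h$, $D_{\Psi J}=\frac1{16}\Psi-\frac18J$. *)

theory Defs
  imports Complex_Main
begin

definition Gamma :: "nat \<Rightarrow> (nat \<Rightarrow> real) set" where
  "Gamma n = {p. (\<forall>i\<in>{1..n}. p i > 0) \<and> (\<Sum>i=1..n. p i) = 1}"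

definition hell :: "nat \<Rightarrow> (nat \<Rightarrow> real) \<Rightarrow> (nat \<Rightarrow> real) \<Rightarrow> real" where
  "hell n p q = (1/2) * (\<Sum>i=1..n. (sqrt (p i) - sqrt (q i))^2)"

definition Psi :: "nat \<Rightarrow> (nat \<Rightarrow> real) \<Rightarrow> (nat \<Rightarrow> real) \<Rightarrow> real" where
  "Psi n p q = (\<Sum>i=1..n. (p i - q i)^2 * (p i + q i) / (p i * q i))"

definition Jdiv :: "nat \<Rightarrow> (nat \<Rightarrow> real) \<Rightarrow> (nat \<Rightarrow> real) \<Rightarrow> real" where
  "Jdiv n p q = (\<Sum>i=1..n. (p i - q i) * ln (p i / q i))"

definition D_Psi_h :: "nat \<Rightarrow> (nat \<Rightarrow> real) \<Rightarrow> (nat \<Rightarrow> real) \<Rightarrow> real" where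
  "D_Psi_h n p q = Psi n p q / 16 - hell n p q"

definition D_Psi_J :: "nat \<Rightarrow> (nat \<Rightarrow> real) \<Rightarrow> (nat \<Rightarrow> real) \<Rightarrow> real" where
  "D_Psi_J n p q = Psi n p q / 16 - Jdiv n p q / 8"

end

theory Submission
  imports Defs
begin

text \<open>
  Scaling by 128, the claim is \<open>\<Psi> - 18 J + 128 h \<ge> 0\<close>, and this holds summand by
  summand for arbitrary positive \<open>p, q\<close>.
  With \<open>t = sqrt (p / q)\<close> the summand is \<open>36 q (t\<^sup>2 - 1) (ln_bound t - ln t)\<close>, and
  \<open>ln_bound - ln\<close> is nondecreasing on \<open>(0, \<infinity>)\<close> and vanishes at \<open>1\<close>, so it has
  the sign of \<open>t\<^sup>2 - 1\<close>.
\<close>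

definition ln_bound :: "real \<Rightarrow> real" where
  "ln_bound t = t\<^sup>2 / 36 - 1 / (36 * t\<^sup>2) + 16/9 * (t - 1) / (t + 1)"

lemma has_real_derivative_ln_bound_minus_ln:
  assumes "0 < x"
  shows "((\<lambda>t. ln_bound t - ln t) has_real_derivative
           (x - 1)^4 * (x\<^sup>2 + 6*x + 1) / (18 * x^3 * (x + 1)\<^sup>2)) (at x)"
proof -
  have "((\<lambda>t. ln_bound t - ln t) has_real_derivative
          x / 18 + 1 / (18 * x^3) + 32 / (9 * (x + 1)\<^sup>2) - 1 / x) (at x)"
    unfolding ln_bound_def
    apply (insert assms)
    apply (rule derivative_eq_intros refl | simp)+
    apply (simp add: field_simps power2_eq_square power3_eq_cube power4_eq_xxxx)
    done
  moreover have "x / 18 + 1 / (18 * x^3) + 32 / (9 * (x + 1)\<^sup>2) - 1 / x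
      = (x - 1)^4 * (x\<^sup>2 + 6*x + 1) / (18 * x^3 * (x + 1)\<^sup>2)"
  proof -
    have "x + 1 \<noteq> 0" using assms by simp
    then show ?thesis using assms by (simp add: divide_simps) algebra
  qed
  ultimately show ?thesis by simp
qed

lemma ln_bound_minus_ln_mono:
  assumes "0 < s" "s \<le> t"
  shows "ln_bound s - ln s \<le> ln_bound t - ln t"
proof (rule DERIV_nonneg_imp_nondecreasing[OF assms(2)])
  fix x assume "s \<le> x" "x \<le> t"
  with assms have "0 < x" by simp
  then show "\<exists>y. ((\<lambda>x. ln_bound x - ln x) has_real_derivative y) (at x) \<and> 0 \<le> y"
    using has_real_derivative_ln_bound_minus_ln by (fastforce simp: zero_le_even_power)
qed

lemma ln_bound_minus_ln_sign:
  assumes "0 < t"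
  shows "0 \<le> (t\<^sup>2 - 1) * (ln_bound t - ln t)"
proof -
  have at_one: "ln_bound 1 - ln 1 = 0" by (simp add: ln_bound_def)
  show ?thesis
  proof (cases "1 \<le> t")
    case True
    then show ?thesis
      using ln_bound_minus_ln_mono[OF _ True] at_one by (simp add: one_le_power)
  next
    case False
    then show ?thesis
      using ln_bound_minus_ln_mono[OF assms, of 1] at_one assms
      by (simp add: power_le_one mult_nonpos_nonpos)
  qed
qed

lemma sq_minus_one_mult_ln_bound:
  assumes "0 < t"
  shows "36 * (t\<^sup>2 - 1) * ln_bound t = (t\<^sup>2 - 1)\<^sup>2 * (t\<^sup>2 + 1) / t\<^sup>2 + 64 * (t - 1)\<^sup>2"
proof -
  have "t + 1 \<noteq> 0" "t \<noteq> 0" using assms by simp_all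
  then show ?thesis unfolding ln_bound_def by (simp add: divide_simps) algebra
qed

lemma Psi_J_hell_summand_nonneg:
  fixes p q :: real
  assumes "0 < p" "0 < q"
  shows "0 \<le> (p - q)\<^sup>2 * (p + q) / (p * q) - 18 * ((p - q) * ln (p / q))
              + 64 * (sqrt p - sqrt q)\<^sup>2"
proof -
  define t where "t = sqrt p / sqrt q"
  define A where "A = (t\<^sup>2 - 1)\<^sup>2 * (t\<^sup>2 + 1) / t\<^sup>2"
  have "0 < t" using assms by (simp add: t_def)
  have p: "p = t\<^sup>2 * q" using assms by (simp add: t_def power_divide)
  have ln_p_q: "ln (p / q) = 2 * ln t"
    using assms \<open>0 < t\<close> by (simp add: p ln_realpow)
  have "sqrt p - sqrt q = (t - 1) * sqrt q" using assms by (simp add: t_def algebra_simps)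
  then have sqrt_diff: "(sqrt p - sqrt q)\<^sup>2 = (t - 1)\<^sup>2 * q"
    using assms by (simp add: power_mult_distrib)
  have cubic: "(p - q)\<^sup>2 * (p + q) / (p * q) = q * A"
    unfolding p A_def using assms \<open>0 < t\<close> by (simp add: field_simps power2_eq_square)
  have "0 \<le> 36 * q * ((t\<^sup>2 - 1) * (ln_bound t - ln t))"
    using assms ln_bound_minus_ln_sign[OF \<open>0 < t\<close>] by simp
  also have "\<dots> = q * (36 * (t\<^sup>2 - 1) * ln_bound t) - 36 * q * (t\<^sup>2 - 1) * ln t"
    by (simp add: algebra_simps)
  also have "\<dots> = q * (A + 64 * (t - 1)\<^sup>2) - 36 * q * (t\<^sup>2 - 1) * ln t"
    unfolding A_def sq_minus_one_mult_ln_bound[OF \<open>0 < t\<close>] ..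
  also have "\<dots> = (p - q)\<^sup>2 * (p + q) / (p * q) - 18 * ((p - q) * ln (p / q))
                    + 64 * (sqrt p - sqrt q)\<^sup>2"
    unfolding cubic ln_p_q sqrt_diff unfolding p by (simp add: algebra_simps)
  finally show ?thesis .
qed

lemma Psi_J_hell_nonneg:
  assumes "\<And>i. i \<in> {1..n} \<Longrightarrow> 0 < P i \<and> 0 < Q i"
  shows "0 \<le> Psi n P Q - 18 * Jdiv n P Q + 128 * hell n P Q"
proof -
  have "0 \<le> (\<Sum>i=1..n. (P i - Q i)\<^sup>2 * (P i + Q i) / (P i * Q i)
              - 18 * ((P i - Q i) * ln (P i / Q i)) + 64 * (sqrt (P i) - sqrt (Q i))\<^sup>2)"
    using assms Psi_J_hell_summand_nonneg by (intro sum_nonneg) auto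
  also have "\<dots> = Psi n P Q - 18 * Jdiv n P Q + 128 * hell n P Q"
    unfolding Psi_def Jdiv_def hell_def
    by (simp add: sum.distrib sum_subtractf sum_distrib_left)
  finally show ?thesis .
qed

theorem proposition5p12:
  fixes n :: nat and P Q :: "nat \<Rightarrow> real"
  assumes "n \<ge> 2" and "P \<in> Gamma n" and "Q \<in> Gamma n"
  shows "D_Psi_h n P Q \<le> 9/8 * D_Psi_J n P Q"
proof -
  have "0 \<le> Psi n P Q - 18 * Jdiv n P Q + 128 * hell n P Q"
    using assms(2,3) by (intro Psi_J_hell_nonneg) (auto simp: Gamma_def)
  then show ?thesis unfolding D_Psi_h_def D_Psi_J_def by simp
qed

end
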